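(* Let $X=\operatorname{diag}(x_1,\dots,x_s)$ and $Y=\operatorname{diag}(y_1,\dots,y_s)$ be real diagonal matrices. The following are equivalent: (i) there exist unitary $U,V\in \mathcal U(s)$ such that $XUY=V$; (ii) there exists a permutation $\sigma$ of $\{1,\dots,s\}$ such that $|x_iy_{\sigma(i)}|=1$ for every $i\in\{1,\dots,s\}$.
   Context: $\mathcal U(s)$ denotes the group of $s\times s$ complex unitary matrices. *)

theory Defs
  imports "HOL-Analysis.Analysis"
begin

definition cmat_adjoint :: "complex^'n^'n \<Rightarrow> complex^'n^'n" where
  "cmat_adjoint U = (\<chi> i j. cnj (U $ j $ i))"

definition unitary_mat :: "complex^'n^'n \<Rightarrow> bool" where
  "unitary_mat U \<longleftrightarrow> U ** cmat_adjoint U = mat 1 \<and> cmat_adjoint U ** U = mat 1"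

definition real_diag :: "('n \<Rightarrow> real) \<Rightarrow> complex^'n^'n" where
  "real_diag x = (\<chi> i j. if i = j then complex_of_real (x i) else 0)"

end

theory Submission
  imports Defs
begin

(* If X U Y = V with U, V unitary, then the entrywise squared moduli B of U and
   a_i B_ij b_j of V (a = x^2, b = y^2) are both doubly stochastic.  Summing the
   nonnegative terms B_ij (a_i b_j - 1)^2 / a_i with the help of the row and column
   sums of both matrices gives 0, so a_i b_j = 1 on the support of B.  The level
   sets of a and of 1/b are therefore unions of blocks of that support, and
   double stochasticity forces such blocks to have as many rows as columns; matching
   them up gives the permutation.  Conversely, for the permutation matrix P of
   sigma, X P Y is a permutation matrix scaled by the unimodular x_i y_sigma(i). *)

definition doubly_stochastic :: "('n::finite \<Rightarrow> 'n \<Rightarrow> real) \<Rightarrow> bool" where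
  "doubly_stochastic B \<longleftrightarrow> (\<forall>i j. 0 \<le> B i j) \<and> (\<forall>i. (\<Sum>j\<in>UNIV. B i j) = 1) \<and> (\<forall>j. (\<Sum>i\<in>UNIV. B i j) = 1)"

definition monomial_mat :: "('n::finite \<Rightarrow> 'n) \<Rightarrow> ('n \<Rightarrow> 'a::zero) \<Rightarrow> 'a^'n^'n" where
  "monomial_mat \<sigma> s = (\<chi> i j. if j = \<sigma> i then s i else 0)"

lemma real_diag_mult_entry:
  "(real_diag x ** A) $ i $ j = of_real (x i) * A $ i $ j"
  by (simp add: matrix_matrix_mult_def real_diag_def if_distrib if_distribR sum.delta cong: if_cong)

lemma mult_real_diag_entry:
  "(A ** real_diag y) $ i $ j = A $ i $ j * of_real (y j)"
  by (simp add: matrix_matrix_mult_def real_diag_def if_distrib if_distribR sum.delta' cong: if_cong)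

lemma unitary_mat_iff_left_inverse:
  fixes U :: "complex^'n::finite^'n"
  shows "unitary_mat U \<longleftrightarrow> cmat_adjoint U ** U = mat 1"
  unfolding unitary_mat_def using matrix_left_right_inverse by blast

lemma unitary_mat_doubly_stochastic:
  fixes U :: "complex^'n::finite^'n"
  assumes "unitary_mat U"
  shows "doubly_stochastic (\<lambda>i j. (cmod (U $ i $ j))\<^sup>2)"
proof -
  have "(\<Sum>j\<in>UNIV. (cmod (U $ i $ j))\<^sup>2) = 1" for i
  proof -
    have "complex_of_real (\<Sum>j\<in>UNIV. (cmod (U $ i $ j))\<^sup>2) = (U ** cmat_adjoint U) $ i $ i"
      by (simp only: of_real_sum complex_norm_square)
         (simp add: matrix_matrix_mult_def cmat_adjoint_def)
    also have "\<dots> = 1"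
      using assms by (simp add: unitary_mat_def mat_def)
    finally show ?thesis
      using of_real_eq_1_iff by blast
  qed
  moreover have "(\<Sum>i\<in>UNIV. (cmod (U $ i $ j))\<^sup>2) = 1" for j
  proof -
    have "complex_of_real (\<Sum>i\<in>UNIV. (cmod (U $ i $ j))\<^sup>2) = (cmat_adjoint U ** U) $ j $ j"
      by (simp only: of_real_sum complex_norm_square)
         (simp add: matrix_matrix_mult_def cmat_adjoint_def mult.commute)
    also have "\<dots> = 1"
      using assms by (simp add: unitary_mat_def mat_def)
    finally show ?thesis
      using of_real_eq_1_iff by blast
  qed
  ultimately show ?thesis
    by (simp add: doubly_stochastic_def)
qed

lemma real_diag_mult_monomial_mat:
  "real_diag x ** monomial_mat \<sigma> s ** real_diag y
     = monomial_mat \<sigma> (\<lambda>i. of_real (x i) * s i * of_real (y (\<sigma> i)))"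
  by (simp add: vec_eq_iff real_diag_mult_entry mult_real_diag_entry monomial_mat_def)

lemma unitary_monomial_mat:
  assumes "\<sigma> permutes UNIV" and "\<And>i. cmod (s i) = 1"
  shows "unitary_mat (monomial_mat \<sigma> s)"
  unfolding unitary_mat_iff_left_inverse
proof (intro iffD2[OF vec_eq_iff] allI)
  fix i k
  have "(cmat_adjoint (monomial_mat \<sigma> s) ** monomial_mat \<sigma> s) $ i $ k
      = (\<Sum>j\<in>UNIV. if j = inv \<sigma> i then (if i = k then cnj (s j) * s j else 0) else 0)"
    unfolding matrix_matrix_mult_def cmat_adjoint_def monomial_mat_def vec_lambda_beta
    using permutes_inverses[OF assms(1)] by (intro sum.cong) auto
  also have "\<dots> = mat 1 $ i $ k"
    using assms(2) by (simp add: mat_def mult.commute complex_norm_square[symmetric])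
  finally show "(cmat_adjoint (monomial_mat \<sigma> s) ** monomial_mat \<sigma> s) $ i $ k = mat 1 $ i $ k" .
qed

lemma doubly_stochastic_block_card_eq:
  assumes B: "doubly_stochastic B"
    and rows_in: "\<And>i j. i \<in> I \<Longrightarrow> B i j \<noteq> 0 \<Longrightarrow> j \<in> J"
    and cols_in: "\<And>i j. j \<in> J \<Longrightarrow> B i j \<noteq> 0 \<Longrightarrow> i \<in> I"
  shows "card I = card J"
proof -
  have "real (card I) = (\<Sum>i\<in>I. \<Sum>j\<in>UNIV. B i j)"
    using B by (simp add: doubly_stochastic_def)
  also have "\<dots> = (\<Sum>i\<in>I. \<Sum>j\<in>J. B i j)"
    using rows_in by (intro sum.cong refl sum.mono_neutral_right) auto
  also have "\<dots> = (\<Sum>j\<in>J. \<Sum>i\<in>I. B i j)"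
    by (rule sum.swap)
  also have "\<dots> = (\<Sum>j\<in>J. \<Sum>i\<in>UNIV. B i j)"
    using cols_in by (intro sum.cong refl sum.mono_neutral_left) auto
  also have "\<dots> = real (card J)"
    using B by (simp add: doubly_stochastic_def)
  finally show ?thesis
    by simp
qed

lemma permutes_UNIV_of_equal_fibre_cards:
  fixes f g :: "'n::finite \<Rightarrow> 'c"
  assumes "\<And>c. card {i. f i = c} = card {j. g j = c}"
  obtains \<sigma> where "\<sigma> permutes UNIV" and "\<And>i. g (\<sigma> i) = f i"
proof -
  have "\<forall>c. \<exists>h. bij_betw h {i. f i = c} {j. g j = c}"
    using assms by (auto intro!: finite_same_card_bij)
  then obtain h where h: "\<And>c. bij_betw (h c) {i. f i = c} {j. g j = c}"
    by metis
  define \<sigma> where "\<sigma> i = h (f i) i" for i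
  have g_\<sigma>: "g (\<sigma> i) = f i" for i
    using bij_betwE[OF h[of "f i"]] by (simp add: \<sigma>_def)
  have "inj \<sigma>"
  proof (rule injI)
    fix i i' assume "\<sigma> i = \<sigma> i'"
    moreover from this have "f i = f i'"
      using g_\<sigma> by metis
    ultimately show "i = i'"
      using bij_betw_imp_inj_on[OF h[of "f i"]] by (auto simp: \<sigma>_def dest: inj_onD)
  qed
  then have "\<sigma> permutes UNIV"
    using finite_UNIV_inj_surj[of \<sigma>] by (intro bij_imp_permutes) (auto simp: bij_def)
  with g_\<sigma> show ?thesis
    using that by blast
qed

lemma doubly_stochastic_support_permutation:
  fixes a b :: "'n::finite \<Rightarrow> 'a::field"
  assumes B: "doubly_stochastic B" and supp: "\<And>i j. B i j \<noteq> 0 \<Longrightarrow> a i * b j = 1"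
  obtains \<sigma> where "\<sigma> permutes UNIV" and "\<And>i. a i * b (\<sigma> i) = 1"
proof -
  have inverse_b: "inverse (b j) = a i" if "B i j \<noteq> 0" for i j
    using supp[OF that] by (simp add: inverse_unique mult.commute)
  have fibres: "card {i. a i = c} = card {j. inverse (b j) = c}" for c
    by (rule doubly_stochastic_block_card_eq[OF B]) (auto dest: inverse_b)
  obtain \<sigma> where \<sigma>: "\<sigma> permutes UNIV" and inv_b: "\<And>i. inverse (b (\<sigma> i)) = a i"
    using permutes_UNIV_of_equal_fibre_cards[OF fibres] by blast
  have "a i \<noteq> 0" for i
  proof -
    have "(\<Sum>j\<in>UNIV. B i j) \<noteq> 0"
      using B by (simp add: doubly_stochastic_def)
    then obtain j where "B i j \<noteq> 0"
      by (meson sum.neutral)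
    then show ?thesis
      using supp by force
  qed
  then have "a i * b (\<sigma> i) = 1" for i
    using inv_b[of i] by (metis inverse_zero left_inverse)
  with \<sigma> show ?thesis
    using that by blast
qed

lemma doubly_stochastic_scaling_support:
  fixes a b :: "'n::finite \<Rightarrow> real"
  assumes B: "doubly_stochastic B" and W: "doubly_stochastic (\<lambda>i j. a i * B i j * b j)"
    and a_nonneg: "\<And>i. 0 \<le> a i"
    and "B i j \<noteq> 0"
  shows "a i * b j = 1"
proof -
  have row_B: "(\<Sum>j\<in>UNIV. B i j) = 1" and col_B: "(\<Sum>i\<in>UNIV. B i j) = 1"
    and row_W: "(\<Sum>j\<in>UNIV. a i * B i j * b j) = 1" and col_W: "(\<Sum>i\<in>UNIV. a i * B i j * b j) = 1"
    and B_nonneg: "0 \<le> B i j" for i j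
    using B W by (auto simp: doubly_stochastic_def)
  have a_pos: "0 < a i" for i
    using row_W[of i] a_nonneg[of i] by (cases "a i = 0") auto
  define t where "t i j = B i j * (a i * b j - 1)\<^sup>2 / a i" for i j
  have t_nonneg: "0 \<le> t i j" for i j
    using B_nonneg[of i j] a_pos[of i] by (simp add: t_def)
  have row_t: "(\<Sum>j\<in>UNIV. t i j) = (\<Sum>j\<in>UNIV. a i * B i j * b j * b j) - (\<Sum>j\<in>UNIV. B i j * b j)"
    for i
  proof -
    have "(\<Sum>j\<in>UNIV. B i j / a i) = (\<Sum>j\<in>UNIV. B i j * b j)"
      using row_B[of i] row_W[of i] a_pos[of i]
      by (simp add: sum_divide_distrib[symmetric] sum_distrib_left[symmetric] mult.assoc field_simps)
    moreover have "t i j = a i * B i j * b j * b j - 2 * (B i j * b j) + B i j / a i" for j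
      using a_pos[of i] by (simp add: t_def field_simps power2_eq_square)
    ultimately show ?thesis
      by (simp add: sum.distrib sum_subtractf sum_distrib_left[symmetric])
  qed
  have "(\<Sum>i\<in>UNIV. \<Sum>j\<in>UNIV. t i j) = 0"
    using col_W col_B
    by (simp add: row_t sum_subtractf sum.swap[of _ UNIV UNIV] sum_distrib_right[symmetric])
  then have "t i j = 0"
    using t_nonneg by (simp add: sum_nonneg sum_nonneg_eq_0_iff)
  with \<open>B i j \<noteq> 0\<close> a_pos[of i] show ?thesis
    by (simp add: t_def)
qed

lemma doubly_stochastic_diagonal_scaling_permutation:
  fixes a b :: "'n::finite \<Rightarrow> real"
  assumes "doubly_stochastic B" and "doubly_stochastic (\<lambda>i j. a i * B i j * b j)"
    and "\<And>i. 0 \<le> a i"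
  obtains \<sigma> where "\<sigma> permutes UNIV" and "\<And>i. a i * b (\<sigma> i) = 1"
proof (rule doubly_stochastic_support_permutation[OF assms(1)])
  fix i j
  assume "B i j \<noteq> 0"
  with assms show "a i * b j = 1"
    by (rule doubly_stochastic_scaling_support)
qed (rule that)

theorem lemma3p8:
  fixes x y :: "'n::finite \<Rightarrow> real"
  shows "(\<exists>U V :: complex^'n^'n. unitary_mat U \<and> unitary_mat V \<and>
            real_diag x ** U ** real_diag y = V)
     \<longleftrightarrow> (\<exists>\<sigma>. \<sigma> permutes (UNIV :: 'n set) \<and> (\<forall>i. \<bar>x i * y (\<sigma> i)\<bar> = 1))"
proof
  assume "\<exists>U V :: complex^'n^'n. unitary_mat U \<and> unitary_mat V \<and> real_diag x ** U ** real_diag y = V"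
  then obtain U V :: "complex^'n^'n" where U: "unitary_mat U" and V: "unitary_mat V"
    and XUY: "real_diag x ** U ** real_diag y = V"
    by blast
  have "(cmod (V $ i $ j))\<^sup>2 = (x i)\<^sup>2 * (cmod (U $ i $ j))\<^sup>2 * (y j)\<^sup>2" for i j
    by (simp flip: XUY add: real_diag_mult_entry mult_real_diag_entry norm_mult power_mult_distrib)
  with unitary_mat_doubly_stochastic[OF V]
  have "doubly_stochastic (\<lambda>i j. (x i)\<^sup>2 * (cmod (U $ i $ j))\<^sup>2 * (y j)\<^sup>2)"
    by simp
  then obtain \<sigma> where \<sigma>: "\<sigma> permutes UNIV" and xy: "\<And>i. (x i)\<^sup>2 * (y (\<sigma> i))\<^sup>2 = 1"
    by (rule doubly_stochastic_diagonal_scaling_permutation[OF unitary_mat_doubly_stochastic[OF U]]) auto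
  have "\<bar>x i * y (\<sigma> i)\<bar> = 1" for i
    using xy[of i] by (simp add: abs_square_eq_1[symmetric] power_mult_distrib)
  with \<sigma> show "\<exists>\<sigma>. \<sigma> permutes UNIV \<and> (\<forall>i. \<bar>x i * y (\<sigma> i)\<bar> = 1)"
    by blast
next
  assume "\<exists>\<sigma>. \<sigma> permutes (UNIV :: 'n set) \<and> (\<forall>i. \<bar>x i * y (\<sigma> i)\<bar> = 1)"
  then obtain \<sigma> where \<sigma>: "\<sigma> permutes (UNIV :: 'n set)" and xy: "\<And>i. \<bar>x i * y (\<sigma> i)\<bar> = 1"
    by blast
  have "unitary_mat (monomial_mat \<sigma> (\<lambda>_. 1))"
    using \<sigma> by (rule unitary_monomial_mat) simp
  moreover have "unitary_mat (monomial_mat \<sigma> (\<lambda>i. of_real (x i * y (\<sigma> i))))"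
    using \<sigma> by (rule unitary_monomial_mat) (simp add: xy flip: of_real_mult)
  moreover have "real_diag x ** monomial_mat \<sigma> (\<lambda>_. 1) ** real_diag y
      = monomial_mat \<sigma> (\<lambda>i. of_real (x i * y (\<sigma> i)))"
    by (simp add: real_diag_mult_monomial_mat)
  ultimately show "\<exists>U V :: complex^'n^'n. unitary_mat U \<and> unitary_mat V \<and> real_diag x ** U ** real_diag y = V"
    by blast
qed

end
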